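(* Let $\gamma\colon P\to Q$ be a flat Kummer homomorphism of quasi-fine and sharp commutative monoids, and let $A=Q/P$ with quotient map $m\colon Q\to A$. Then there exist canonical monoid homomorphisms $P_A\to P$ and $Q_A\to Q$ such that the diagram formed by $P_A\to P$, $Q_A\to Q$, $\gamma_A\colon P_A\to Q_A$, $\gamma\colon P\to Q$, the projection $Q_A\to A$, $(p,\lambda)\mapsto\lambda$, and $m\colon Q\to A$ commutes.
   Context: A monoid is sharp if $0$ is its only unit, quasi-fine if finitely generated and quasi-integral ($p+q=p\Rightarrow q=0$). $\gamma$ is Kummer if injective with every element of $Q$ having a positive multiple in $\gamma(P)$; flat if (integral) whenever $\gamma(p_1)+q_1=\gamma(p_2)+q_2$ there exist $q'\in Q$, $p_1',p_2'\in P$ with $q_i=\gamma(p_i')+q'$, $p_1+p_1'=p_2+p_2'$, and (additionally) whenever $\gamma(p_1)+q=\gamma(p_2)+q$ there exist $q'\in Q$, $p'\in P$ with $q=\gamma(p')+q'$, $p_1+p'=p_2+p'$. $A=Q/P$ is the cokernel, a finite abelian group. For an abelian group $A$, $P_A$ is the free commutative monoid on symbols $e_{\lambda,\lambda'}$ ($\lambda,\lambda'\in A$) modulo the congruence generated by $e_{\lambda,\lambda'}\sim e_{\lambda',\lambda}$, $e_{0,\lambda}\sim0$, $e_{\lambda,\lambda'}+e_{\lambda+\lambda',\lambda''}\sim e_{\lambda',\lambda''}+e_{\lambda'+\lambda'',\lambda}$; $Q_A$ is the set $P_A\times A$ with $(p,\lambda)+(p',\lambda')=(p+p'+e_{\lambda,\lambda'},\lambda+\lambda')$;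 $\gamma_A(p)=(p,0)$. *)

theory Defs
  imports "HOL-Library.Multiset"
begin

(* Commutative monoids are modelled as types of class comm_monoid_add (whole type = monoid). *)

definition mon_hom :: "('a::comm_monoid_add \<Rightarrow> 'b::comm_monoid_add) \<Rightarrow> bool" where
  "mon_hom f \<longleftrightarrow> f 0 = 0 \<and> (\<forall>x y. f (x + y) = f x + f y)"

definition mon_hom_on :: "'c set \<Rightarrow> ('c \<Rightarrow> 'c \<Rightarrow> 'c) \<Rightarrow> 'c \<Rightarrow> ('c \<Rightarrow> 'b::comm_monoid_add) \<Rightarrow> bool" where
  "mon_hom_on C add z f \<longleftrightarrow> f z = 0 \<and> (\<forall>x\<in>C. \<forall>y\<in>C. f (add x y) = f x + f y)"

definition sharp_mon :: "'a::comm_monoid_add itself \<Rightarrow> bool" where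
  "sharp_mon _ \<longleftrightarrow> (\<forall>x::'a. (\<exists>y. x + y = 0) \<longrightarrow> x = 0)"

definition fin_gen_mon :: "'a::comm_monoid_add itself \<Rightarrow> bool" where
  "fin_gen_mon _ \<longleftrightarrow> (\<exists>S::'a set. finite S \<and> (\<forall>x. \<exists>xs. set xs \<subseteq> S \<and> x = sum_list xs))"

definition quasi_integral_mon :: "'a::comm_monoid_add itself \<Rightarrow> bool" where
  "quasi_integral_mon _ \<longleftrightarrow> (\<forall>p q::'a. p + q = p \<longrightarrow> q = 0)"

definition quasi_fine_mon :: "'a::comm_monoid_add itself \<Rightarrow> bool" where
  "quasi_fine_mon T \<longleftrightarrow> fin_gen_mon T \<and> quasi_integral_mon T"

definition nmul :: "nat \<Rightarrow> 'a::comm_monoid_add \<Rightarrow> 'a" where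
  "nmul n q = (\<Sum>i<n. q)"

definition kummer_hom :: "('p::comm_monoid_add \<Rightarrow> 'q::comm_monoid_add) \<Rightarrow> bool" where
  "kummer_hom \<gamma> \<longleftrightarrow> inj \<gamma> \<and> (\<forall>q. \<exists>n>0. \<exists>p. \<gamma> p = nmul n q)"

definition flat_hom :: "('p::comm_monoid_add \<Rightarrow> 'q::comm_monoid_add) \<Rightarrow> bool" where
  "flat_hom \<gamma> \<longleftrightarrow>
     (\<forall>p1 p2 q1 q2. \<gamma> p1 + q1 = \<gamma> p2 + q2 \<longrightarrow>
        (\<exists>q' p1' p2'. q1 = \<gamma> p1' + q' \<and> q2 = \<gamma> p2' + q' \<and> p1 + p1' = p2 + p2')) \<and>
     (\<forall>p1 p2 q. \<gamma> p1 + q = \<gamma> p2 + q \<longrightarrow>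
        (\<exists>q' p'. q = \<gamma> p' + q' \<and> p1 + p' = p2 + p'))"

(* P_A: free commutative monoid on symbols e_{l,l'} (multisets of pairs) modulo the
   congruence generated by the three relations *)
inductive PA_rel :: "('a::comm_monoid_add \<times> 'a) multiset \<Rightarrow> ('a \<times> 'a) multiset \<Rightarrow> bool" where
  PA_swap: "PA_rel {#(l, l')#} {#(l', l)#}"
| PA_zero: "PA_rel {#(0, l)#} {#}"
| PA_cocycle: "PA_rel {#(l, l'), (l + l', l'')#} {#(l', l''), (l' + l'', l)#}"
| PA_refl: "PA_rel x x"
| PA_sym: "PA_rel x y \<Longrightarrow> PA_rel y x"
| PA_trans: "PA_rel x y \<Longrightarrow> PA_rel y z \<Longrightarrow> PA_rel x z"
| PA_add: "PA_rel x y \<Longrightarrow> PA_rel (x + z) (y + z)"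

definition PA_class :: "('a::comm_monoid_add \<times> 'a) multiset \<Rightarrow> ('a \<times> 'a) multiset set" where
  "PA_class x = {y. PA_rel x y}"

definition PA_carrier :: "('a::comm_monoid_add \<times> 'a) multiset set set" where
  "PA_carrier = range PA_class"

definition PA_plus :: "('a::comm_monoid_add \<times> 'a) multiset set \<Rightarrow> ('a \<times> 'a) multiset set \<Rightarrow> ('a \<times> 'a) multiset set" where
  "PA_plus X Y = PA_class ((SOME x. x \<in> X) + (SOME y. y \<in> Y))"

definition PA_zero_el :: "('a::comm_monoid_add \<times> 'a) multiset set" where
  "PA_zero_el = PA_class {#}"

definition PA_e :: "'a::comm_monoid_add \<Rightarrow> 'a \<Rightarrow> ('a \<times> 'a) multiset set" where
  "PA_e l l' = PA_class {#(l, l')#}"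

definition QA_carrier :: "(('a::comm_monoid_add \<times> 'a) multiset set \<times> 'a) set" where
  "QA_carrier = PA_carrier \<times> UNIV"

definition QA_plus :: "(('a::comm_monoid_add \<times> 'a) multiset set \<times> 'a) \<Rightarrow> (('a \<times> 'a) multiset set \<times> 'a) \<Rightarrow> (('a \<times> 'a) multiset set \<times> 'a)" where
  "QA_plus x y = (PA_plus (PA_plus (fst x) (fst y)) (PA_e (snd x) (snd y)), snd x + snd y)"

definition QA_zero_el :: "('a::comm_monoid_add \<times> 'a) multiset set \<times> 'a" where
  "QA_zero_el = (PA_zero_el, 0)"

definition gamma_A :: "('a::comm_monoid_add \<times> 'a) multiset set \<Rightarrow> ('a \<times> 'a) multiset set \<times> 'a" where
  "gamma_A p = (p, 0)"

end

theory Submission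
  imports Defs Complex_Main
begin

(* Let L q be the largest number of nonzero generators in an expression of q. It is finite by
   Dickson's lemma, since quasi-integrality and sharpness forbid two distinct comparable
   expressions of the same element, and it strictly increases when a nonzero element is added.
   Choose in every fibre of m an element s \<lambda> of minimal length; flatness then shows that each
   fibre is the free orbit s \<lambda> + \<gamma>(P). Hence s \<lambda> + s \<lambda>' = s (\<lambda> + \<lambda>') + \<gamma> (c \<lambda> \<lambda>') for a
   unique c, which is a normalized symmetric 2-cocycle. It induces P_A \<rightarrow> P, e_{\<lambda>,\<lambda>'} \<mapsto> c \<lambda> \<lambda>',
   and Q_A \<rightarrow> Q, (p, \<lambda>) \<mapsto> \<gamma>(p) + s \<lambda>. *)

lemma nat_seq_has_incseq_subseq:
  fixes x :: "nat \<Rightarrow> nat"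
  obtains r :: "nat \<Rightarrow> nat" where "strict_mono r" "incseq (\<lambda>n. x (r n))"
proof -
  obtain r :: "nat \<Rightarrow> nat" where r: "strict_mono r" and mono: "monoseq (\<lambda>n. x (r n))"
    using seq_monosub[of x] by (elim exE conjE)
  show thesis
  proof (cases "incseq (\<lambda>n. x (r n))")
    case True
    with r show thesis by (rule that)
  next
    case False
    then have dec: "decseq (\<lambda>n. x (r n))"
      using mono by (simp add: monoseq_iff)
    obtain N where N: "\<forall>n. x (r N) \<le> x (r n)"
      using ex_has_least_nat[where P = "\<lambda>_. True" and m = "\<lambda>n. x (r n)"] by blast
    have "x (r (n + N)) = x (r N)" for n
      using N[rule_format, of "n + N"] decseqD[OF dec, of N "n + N"] by simp
    then have "incseq (\<lambda>n. x (r (n + N)))" by (simp add: incseq_def)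
    moreover have "strict_mono (\<lambda>n. r (n + N))"
      using r by (simp add: strict_mono_def)
    ultimately show thesis using that[of "\<lambda>n. r (n + N)"] by blast
  qed
qed

lemma pointwise_incseq_subseq:
  fixes f :: "nat \<Rightarrow> 'b \<Rightarrow> nat"
  assumes "finite S"
  obtains r :: "nat \<Rightarrow> nat" where "strict_mono r" "\<And>i j s. i \<le> j \<Longrightarrow> s \<in> S \<Longrightarrow> f (r i) s \<le> f (r j) s"
  using assms
proof (induction S arbitrary: thesis rule: finite_induct)
  case empty
  show ?case by (rule empty.prems[OF strict_mono_id]) simp
next
  case (insert s0 S)
  obtain r :: "nat \<Rightarrow> nat" where r: "strict_mono r" "\<And>i j s. i \<le> j \<Longrightarrow> s \<in> S \<Longrightarrow> f (r i) s \<le> f (r j) s"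
    by (rule insert.IH) blast
  obtain r' :: "nat \<Rightarrow> nat" where r': "strict_mono r'" "incseq (\<lambda>n. f (r (r' n)) s0)"
    by (rule nat_seq_has_incseq_subseq)
  have "f (r (r' i)) s \<le> f (r (r' j)) s" if "i \<le> j" "s \<in> insert s0 S" for i j s
  proof (cases "s = s0")
    case True
    then show ?thesis using incseqD[OF r'(2) \<open>i \<le> j\<close>] by simp
  next
    case False
    then have "s \<in> S" using that(2) by simp
    moreover have "r' i \<le> r' j" using strict_mono_less_eq[OF r'(1)] that(1) by simp
    ultimately show ?thesis using r(2) by blast
  qed
  then show ?case by (rule insert.prems[OF strict_mono_compose[OF r(1) r'(1)]])
qed

lemma dickson_mset_subseq:
  assumes "finite S" and "\<And>n. set_mset (M n) \<subseteq> S"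
  obtains r :: "nat \<Rightarrow> nat" where "strict_mono r" "\<And>i j. i \<le> j \<Longrightarrow> M (r i) \<subseteq># M (r j)"
proof -
  obtain r :: "nat \<Rightarrow> nat" where r: "strict_mono r"
    and le: "\<And>i j s. i \<le> j \<Longrightarrow> s \<in> S \<Longrightarrow> count (M (r i)) s \<le> count (M (r j)) s"
    using pointwise_incseq_subseq[OF assms(1), of "\<lambda>n s. count (M n) s"] by blast
  have "M (r i) \<subseteq># M (r j)" if "i \<le> j" for i j
  proof (rule mset_subset_eqI)
    fix s
    show "count (M (r i)) s \<le> count (M (r j)) s"
    proof (cases "s \<in> S")
      case True
      then show ?thesis by (rule le[OF that])
    next
      case False
      then have "s \<notin># M (r i)" using assms(2) by blast
      then show ?thesis by (simp add: not_in_iff)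
    qed
  qed
  with r show thesis by (rule that)
qed

lemma sum_mset_eq_0_sharp:
  fixes M :: "'q::comm_monoid_add multiset"
  assumes "sharp_mon TYPE('q)" and "sum_mset M = 0" and "x \<in># M"
  shows "x = 0"
proof -
  obtain N where "M = add_mset x N" using assms(3) by (metis mset_add)
  then have "x + sum_mset N = 0" using assms(2) by simp
  then show ?thesis using assms(1) unfolding sharp_mon_def by blast
qed

definition sum_reps :: "'q::comm_monoid_add set \<Rightarrow> 'q \<Rightarrow> 'q multiset set" where
  "sum_reps S q = {M. set_mset M \<subseteq> S \<and> sum_mset M = q}"

lemma finite_sum_reps:
  fixes S :: "'q::comm_monoid_add set"
  assumes "finite S" and "0 \<notin> S"
    and "quasi_integral_mon TYPE('q)" and "sharp_mon TYPE('q)"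
  shows "finite (sum_reps S q)"
proof (rule ccontr)
  assume "infinite (sum_reps S q)"
  then obtain M :: "nat \<Rightarrow> 'q multiset" where "inj M" and M: "range M \<subseteq> sum_reps S q"
    using infinite_countable_subset by blast
  then have "set_mset (M n) \<subseteq> S" for n by (auto simp: sum_reps_def)
  then obtain r :: "nat \<Rightarrow> nat" where "strict_mono r" and sub: "M (r 0) \<subseteq># M (r 1)"
    using dickson_mset_subseq[OF assms(1)] by (metis zero_le_one)
  define D where "D = M (r 1) - M (r 0)"
  have M1: "M (r 1) = M (r 0) + D"
    using sub by (simp add: D_def subset_mset.add_diff_inverse)
  have "M (r 0) \<noteq> M (r 1)"
    using \<open>inj M\<close> \<open>strict_mono r\<close> by (metis injD strict_mono_eq zero_neq_one)
  then obtain x where x: "x \<in># D"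
    using M1 by (metis add_0_right multiset_nonemptyE)
  have "sum_mset (M i) = q" for i using M by (auto simp: sum_reps_def)
  then have "q + sum_mset D = q" using M1 by (metis sum_mset.union)
  then have "sum_mset D = 0"
    using assms(3) unfolding quasi_integral_mon_def by blast
  then have "x = 0" using sum_mset_eq_0_sharp[OF assms(4)] x by blast
  moreover have "x \<in> S" using x M1 \<open>set_mset (M (r 1)) \<subseteq> S\<close> by auto
  ultimately show False using assms(2) by simp
qed

definition gen_length :: "'q::comm_monoid_add set \<Rightarrow> 'q \<Rightarrow> nat" where
  "gen_length S q = Max (size ` sum_reps S q)"

lemma gen_length_strict_mono:
  fixes S :: "'q::comm_monoid_add set"
  assumes "finite S" and "0 \<notin> S" and gen: "\<And>y. sum_reps S y \<noteq> {}"
    and "quasi_integral_mon TYPE('q)" and "sharp_mon TYPE('q)" and "x \<noteq> 0"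
  shows "gen_length S q < gen_length S (q + x)"
proof -
  have fin: "finite (size ` sum_reps S y)" for y
    using finite_sum_reps[OF assms(1,2,4,5)] by blast
  obtain M where M: "M \<in> sum_reps S q" "size M = gen_length S q"
    using Max_in[OF fin] gen unfolding gen_length_def by (metis (no_types, lifting) image_iff image_is_empty)
  obtain N where N: "N \<in> sum_reps S x" using gen by blast
  then have "N \<noteq> {#}" using \<open>x \<noteq> 0\<close> by (auto simp: sum_reps_def)
  have "M + N \<in> sum_reps S (q + x)" using M(1) N by (auto simp: sum_reps_def)
  then have "size (M + N) \<le> gen_length S (q + x)"
    unfolding gen_length_def by (rule Max_ge[OF fin imageI])
  then show ?thesis using M(2) \<open>N \<noteq> {#}\<close> by (simp add: nonempty_has_size)
qed

lemma exists_strict_mono_length: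
  assumes "fin_gen_mon TYPE('q::comm_monoid_add)"
    and "quasi_integral_mon TYPE('q)" and "sharp_mon TYPE('q)"
  obtains L :: "'q::comm_monoid_add \<Rightarrow> nat" where "\<And>q x. x \<noteq> 0 \<Longrightarrow> L q < L (q + x)"
proof -
  obtain S :: "'q set" where "finite S" and S: "\<And>y. \<exists>xs. set xs \<subseteq> S \<and> y = sum_list xs"
    using assms(1) unfolding fin_gen_mon_def by blast
  have "mset (filter (\<lambda>x. x \<noteq> 0) xs) \<in> sum_reps (S - {0}) y"
    if "set xs \<subseteq> S" "y = sum_list xs" for xs y
    using that sum_list_map_filter[of xs "\<lambda>x. x \<noteq> 0" "\<lambda>x. x"]
    by (auto simp: sum_reps_def sum_mset_sum_list simp del: mset_filter)
  then have "sum_reps (S - {0}) y \<noteq> {}" for y using S by blast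
  then show thesis
    using gen_length_strict_mono[of "S - {0}"] \<open>finite S\<close> assms(2,3) that by blast
qed

(* The relations defining P_A, with e_{l,l'} read as f l l'. *)
definition normalized_sym_cocycle :: "('a::comm_monoid_add \<Rightarrow> 'a \<Rightarrow> 'p::comm_monoid_add) \<Rightarrow> bool" where
  "normalized_sym_cocycle f \<longleftrightarrow>
     (\<forall>l l'. f l l' = f l' l) \<and> (\<forall>l. f 0 l = 0) \<and>
     (\<forall>l l' l''. f l l' + f (l + l') l'' = f l' l'' + f (l' + l'') l)"

definition cocycle_sum :: "('a \<Rightarrow> 'a \<Rightarrow> 'p::comm_monoid_add) \<Rightarrow> ('a \<times> 'a) multiset \<Rightarrow> 'p" where
  "cocycle_sum f M = (\<Sum>(l, l')\<in>#M. f l l')"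

definition PA_lift :: "('a::comm_monoid_add \<Rightarrow> 'a \<Rightarrow> 'p::comm_monoid_add) \<Rightarrow> ('a \<times> 'a) multiset set \<Rightarrow> 'p" where
  "PA_lift f X = cocycle_sum f (SOME x. x \<in> X)"

lemma cocycle_sum_add [simp]: "cocycle_sum f (M + N) = cocycle_sum f M + cocycle_sum f N"
  by (simp add: cocycle_sum_def)

lemma cocycle_sum_PA_rel:
  assumes "normalized_sym_cocycle f" and "PA_rel x y"
  shows "cocycle_sum f x = cocycle_sum f y"
proof -
  have sym: "f l l' = f l' l" and zero: "f 0 l = 0"
    and cocycle: "f l l' + f (l + l') l'' = f l' l'' + f (l' + l'') l" for l l' l''
    using assms(1) unfolding normalized_sym_cocycle_def by blast+
  from assms(2) show ?thesis
  proof (induction rule: PA_rel.induct)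
    case (PA_swap l l')
    show ?case by (simp add: cocycle_sum_def sym[of l l'])
  next
    case (PA_zero l)
    show ?case by (simp add: cocycle_sum_def zero)
  next
    case (PA_cocycle l l' l'')
    show ?case by (simp add: cocycle_sum_def cocycle)
  qed simp_all
qed

lemma PA_lift_class:
  assumes "normalized_sym_cocycle f"
  shows "PA_lift f (PA_class x) = cocycle_sum f x"
proof -
  have "x \<in> PA_class x" by (simp add: PA_class_def PA_refl)
  then have "PA_rel x (SOME y. y \<in> PA_class x)"
    unfolding PA_class_def by (metis mem_Collect_eq someI)
  then show ?thesis
    unfolding PA_lift_def using cocycle_sum_PA_rel[OF assms] by simp
qed

lemma PA_lift_PA_plus:
  assumes "normalized_sym_cocycle f"
  shows "PA_lift f (PA_plus X Y) = PA_lift f X + PA_lift f Y"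
  by (simp add: PA_plus_def PA_lift_class[OF assms]) (simp add: PA_lift_def)

lemma PA_lift_PA_zero_el:
  assumes "normalized_sym_cocycle f"
  shows "PA_lift f PA_zero_el = 0"
  by (simp add: PA_zero_el_def PA_lift_class[OF assms]) (simp add: cocycle_sum_def)

lemma mon_hom_on_PA_lift:
  assumes "normalized_sym_cocycle f"
  shows "mon_hom_on PA_carrier PA_plus PA_zero_el (PA_lift f)"
  by (simp add: mon_hom_on_def PA_lift_PA_plus[OF assms] PA_lift_PA_zero_el[OF assms])

lemma PA_lift_PA_e:
  assumes "normalized_sym_cocycle f"
  shows "PA_lift f (PA_e l l') = f l l'"
  by (simp add: PA_e_def PA_lift_class[OF assms] cocycle_sum_def)

locale orbit_section =
  fixes \<gamma> :: "'p::comm_monoid_add \<Rightarrow> 'q::comm_monoid_add"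
    and m :: "'q \<Rightarrow> 'a::comm_monoid_add"
    and s :: "'a \<Rightarrow> 'q"
  assumes \<gamma>_hom: "mon_hom \<gamma>" and m_hom: "mon_hom m"
    and m_\<gamma>: "m (\<gamma> p) = 0"
    and s_zero: "s 0 = 0" and m_s: "m (s l) = l"
    and fibre_orbit: "m q = l \<Longrightarrow> \<exists>c. q = s l + \<gamma> c"
    and orbit_cancel: "s l + \<gamma> a = s l + \<gamma> b \<Longrightarrow> a = b"
begin

lemma \<gamma>_zero: "\<gamma> 0 = 0" and \<gamma>_add: "\<gamma> (x + y) = \<gamma> x + \<gamma> y"
  using \<gamma>_hom by (simp_all add: mon_hom_def)

definition factor_set :: "'a \<Rightarrow> 'a \<Rightarrow> 'p" where
  "factor_set l l' = (THE c. s l + s l' = s (l + l') + \<gamma> c)"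

lemma s_add: "s l + s l' = s (l + l') + \<gamma> (factor_set l l')"
proof -
  have "m (s l + s l') = l + l'"
    using m_hom by (simp add: mon_hom_def m_s)
  then obtain c where c: "s l + s l' = s (l + l') + \<gamma> c"
    using fibre_orbit by blast
  then have "factor_set l l' = c"
    unfolding factor_set_def by (rule the_equality) (use c orbit_cancel in metis)
  with c show ?thesis by simp
qed

lemma factor_set_eqI: "s (l + l') + \<gamma> c = s l + s l' \<Longrightarrow> factor_set l l' = c"
  using s_add orbit_cancel by metis

lemma s_add_add:
  "s (l + l' + l'') + \<gamma> (factor_set l l' + factor_set (l + l') l'') = s l + s l' + s l''"
proof -
  have "s (l + l' + l'') + \<gamma> (factor_set l l' + factor_set (l + l') l'')
      = (s (l + l' + l'') + \<gamma> (factor_set (l + l') l'')) + \<gamma> (factor_set l l')"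
    by (simp add: \<gamma>_add ac_simps)
  also have "\<dots> = (s (l + l') + s l'') + \<gamma> (factor_set l l')"
    using s_add[of "l + l'" l''] by simp
  also have "\<dots> = (s (l + l') + \<gamma> (factor_set l l')) + s l''"
    by (simp add: ac_simps)
  also have "\<dots> = s l + s l' + s l''"
    using s_add[of l l'] by simp
  finally show ?thesis .
qed

lemma normalized_sym_cocycle_factor_set: "normalized_sym_cocycle factor_set"
  unfolding normalized_sym_cocycle_def
proof (intro conjI allI)
  show "factor_set l l' = factor_set l' l" for l l'
    by (rule factor_set_eqI) (simp add: s_add add.commute)
  show "factor_set 0 l = 0" for l
    by (rule factor_set_eqI) (simp add: s_zero \<gamma>_zero)
  show "factor_set l l' + factor_set (l + l') l'' = factor_set l' l'' + factor_set (l' + l'') l"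
    for l l' l''
    using s_add_add[of l l' l''] s_add_add[of l' l'' l]
    by (intro orbit_cancel[of "l + l' + l''"]) (simp add: ac_simps)
qed

definition QA_lift :: "('a \<times> 'a) multiset set \<times> 'a \<Rightarrow> 'q" where
  "QA_lift x = \<gamma> (PA_lift factor_set (fst x)) + s (snd x)"

lemma QA_lift_QA_plus: "QA_lift (QA_plus x y) = QA_lift x + QA_lift y"
proof -
  note cocycle = normalized_sym_cocycle_factor_set
  have "QA_lift (QA_plus x y)
      = \<gamma> (PA_lift factor_set (fst x)) + \<gamma> (PA_lift factor_set (fst y))
        + (s (snd x + snd y) + \<gamma> (factor_set (snd x) (snd y)))"
    by (simp add: QA_lift_def QA_plus_def PA_lift_PA_plus[OF cocycle] PA_lift_PA_e[OF cocycle]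
        \<gamma>_add ac_simps)
  also have "\<dots> = \<gamma> (PA_lift factor_set (fst x)) + \<gamma> (PA_lift factor_set (fst y))
        + (s (snd x) + s (snd y))"
    by (simp add: s_add)
  also have "\<dots> = QA_lift x + QA_lift y"
    by (simp add: QA_lift_def ac_simps)
  finally show ?thesis .
qed

lemma QA_lift_QA_zero_el: "QA_lift QA_zero_el = 0"
  by (simp add: QA_lift_def QA_zero_el_def
      PA_lift_PA_zero_el[OF normalized_sym_cocycle_factor_set] \<gamma>_zero s_zero)

lemma mon_hom_on_QA_lift: "mon_hom_on QA_carrier QA_plus QA_zero_el QA_lift"
  by (simp add: mon_hom_on_def QA_lift_QA_plus QA_lift_QA_zero_el)

lemma QA_lift_gamma_A: "QA_lift (gamma_A p) = \<gamma> (PA_lift factor_set p)"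
  by (simp add: QA_lift_def gamma_A_def s_zero)

lemma m_QA_lift: "m (QA_lift x) = snd x"
  using m_hom by (simp add: QA_lift_def mon_hom_def m_\<gamma> m_s)

end

locale flat_quotient =
  fixes \<gamma> :: "'p::comm_monoid_add \<Rightarrow> 'q::comm_monoid_add"
    and m :: "'q \<Rightarrow> 'a::comm_monoid_add"
  assumes \<gamma>_hom: "mon_hom \<gamma>" and m_hom: "mon_hom m" and m_surj: "surj m"
    and flat: "flat_hom \<gamma>"
    and fibres: "m q1 = m q2 \<longleftrightarrow> (\<exists>p1 p2. q1 + \<gamma> p1 = q2 + \<gamma> p2)"
begin

lemma m_add: "m (x + y) = m x + m y"
  using m_hom by (simp add: mon_hom_def)

lemma \<gamma>_zero: "\<gamma> 0 = 0" and \<gamma>_add: "\<gamma> (x + y) = \<gamma> x + \<gamma> y"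
  using \<gamma>_hom by (simp_all add: mon_hom_def)

lemma m_\<gamma>: "m (\<gamma> p) = 0"
proof -
  have "\<gamma> p + \<gamma> 0 = 0 + \<gamma> p" using \<gamma>_hom by (simp add: mon_hom_def)
  then have "m (\<gamma> p) = m 0" using fibres by blast
  with m_hom show ?thesis by (simp add: mon_hom_def)
qed

lemma m_plus_\<gamma>: "m (q + \<gamma> p) = m q"
  by (simp add: m_add m_\<gamma>)

context
  fixes L :: "'q \<Rightarrow> nat"
  assumes L_strict: "\<And>q x. x \<noteq> 0 \<Longrightarrow> L q < L (q + x)"
begin

definition min_section :: "'a \<Rightarrow> 'q" where
  "min_section l = arg_min L (\<lambda>q. m q = l)"

lemma m_min_section: "m (min_section l) = l"
  and min_section_le: "m q = l \<Longrightarrow> L (min_section l) \<le> L q"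
proof -
  obtain q0 where "m q0 = l" using m_surj by (metis surjD)
  then have "m (min_section l) = l \<and> (\<forall>q. m q = l \<longrightarrow> L (min_section l) \<le> L q)"
    unfolding min_section_def by (rule arg_min_nat_lemma)
  then show "m (min_section l) = l" and "m q = l \<Longrightarrow> L (min_section l) \<le> L q" by blast+
qed

(* Flatness writes any two elements of a fibre with a common summand; minimality of the
   length forces the base point to be that summand. *)
lemma fibre_orbit_min_section:
  assumes "m q = l"
  shows "\<exists>c. q = min_section l + \<gamma> c"
proof -
  have "m (min_section l) = m q" using assms m_min_section by simp
  then obtain p1 p2 where "\<gamma> p1 + min_section l = \<gamma> p2 + q"
    using fibres by (metis add.commute)
  then obtain q' a b where a: "min_section l = \<gamma> a + q'" and b: "q = \<gamma> b + q'"
    using flat unfolding flat_hom_def by blast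
  have "m q' = l" using a m_min_section[of l] by (simp add: m_plus_\<gamma> add.commute)
  then have "\<not> L q' < L (min_section l)" using min_section_le[of q'] by simp
  then have "\<gamma> a = 0" using L_strict[of "\<gamma> a" q'] a by (auto simp: add.commute)
  then show ?thesis using a b by (auto simp: add.commute)
qed

lemma min_section_cancel:
  assumes "inj \<gamma>" and "sharp_mon TYPE('p)" and "quasi_integral_mon TYPE('q)"
    and eq: "min_section l + \<gamma> a = min_section l + \<gamma> b"
  shows "a = b"
proof -
  obtain q' p' where p': "min_section l = \<gamma> p' + q'" and "a + p' = b + p'"
    using flat eq unfolding flat_hom_def by (metis add.commute)
  have "m q' = l" using p' m_min_section[of l] by (simp add: m_plus_\<gamma> add.commute)
  then obtain c where c: "q' = min_section l + \<gamma> c" using fibre_orbit_min_section by blast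
  have "min_section l = \<gamma> p' + (min_section l + \<gamma> c)" using p' c by metis
  also have "\<dots> = min_section l + \<gamma> (p' + c)" by (simp add: \<gamma>_add ac_simps)
  finally have "\<gamma> (p' + c) = \<gamma> 0"
    using assms(3) unfolding quasi_integral_mon_def by (metis \<gamma>_zero)
  then have "p' + c = 0" using assms(1) by (simp add: inj_eq)
  then have "p' = 0" using assms(2) unfolding sharp_mon_def by blast
  then show ?thesis using \<open>a + p' = b + p'\<close> by simp
qed

lemma min_section_zero:
  assumes "sharp_mon TYPE('q)"
  shows "min_section 0 = 0"
proof -
  have "m 0 = 0" using m_hom by (simp add: mon_hom_def)
  then obtain c where "0 = min_section 0 + \<gamma> c" using fibre_orbit_min_section by blast
  then show ?thesis using assms unfolding sharp_mon_def by metis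
qed

lemma orbit_section_min_section:
  assumes "inj \<gamma>" and "sharp_mon TYPE('p)"
    and "sharp_mon TYPE('q)" and "quasi_integral_mon TYPE('q)"
  shows "orbit_section \<gamma> m min_section"
  using \<gamma>_hom m_hom m_\<gamma> min_section_zero[OF assms(3)] m_min_section fibre_orbit_min_section
    min_section_cancel[OF assms(1,2,4)]
  by unfold_locales blast+

end

end

theorem proposition5p35:
  fixes \<gamma> :: "'p::comm_monoid_add \<Rightarrow> 'q::comm_monoid_add"
    and m :: "'q \<Rightarrow> 'a::comm_monoid_add"
  assumes "mon_hom \<gamma>"
    and "quasi_fine_mon TYPE('p)" and "sharp_mon TYPE('p)"
    and "quasi_fine_mon TYPE('q)" and "sharp_mon TYPE('q)"
    and "flat_hom \<gamma>" and "kummer_hom \<gamma>"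
    and "mon_hom m" and "surj m"
    and "\<forall>q1 q2. m q1 = m q2 \<longleftrightarrow> (\<exists>p1 p2. q1 + \<gamma> p1 = q2 + \<gamma> p2)"
  shows "\<exists>(g :: ('a \<times> 'a) multiset set \<Rightarrow> 'p) (h :: ('a \<times> 'a) multiset set \<times> 'a \<Rightarrow> 'q).
           mon_hom_on PA_carrier PA_plus PA_zero_el g \<and>
           mon_hom_on QA_carrier QA_plus QA_zero_el h \<and>
           (\<forall>p\<in>PA_carrier. h (gamma_A p) = \<gamma> (g p)) \<and>
           (\<forall>x\<in>QA_carrier. m (h x) = snd x)"
proof -
  interpret flat_quotient \<gamma> m
    using assms(1,6,8,9,10) by unfold_locales blast+
  obtain L :: "'q \<Rightarrow> nat" where L: "\<And>q x. x \<noteq> 0 \<Longrightarrow> L q < L (q + x)"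
    using exists_strict_mono_length assms(4,5) unfolding quasi_fine_mon_def by blast
  interpret orbit_section \<gamma> m "min_section L"
    using orbit_section_min_section[OF L] assms(3,4,5,7)
    unfolding kummer_hom_def quasi_fine_mon_def by blast
  show ?thesis
    using mon_hom_on_PA_lift[OF normalized_sym_cocycle_factor_set] mon_hom_on_QA_lift
      QA_lift_gamma_A m_QA_lift by blast
qed

end
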